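(* Let $F$ be a field of characteristic $0$ and let $f\in F[X]$ be monic of degree $n\geq 1$. Let $K$ be a splitting field of $f$ over $F$, let $S(f)$ be the set of roots of $f$ in $K$, and for $\alpha\in S(f)$ let $m(\alpha)$ be the multiplicity of $\alpha$ as a root of $f$. Let $M_f\in K[X]$ be the unique polynomial of degree less than $|S(f)|$ satisfying $M_f(\alpha)=m(\alpha)$ for all $\alpha\in S(f)$. Set $f_0=f/\gcd(f,f')$, $s=\deg(f_0)$ and $P=f'/\gcd(f,f')$. Then there exist unique $g\in F_s[X]$ and $h\in F[X]$ such that $f_0'g+f_0h=1$. Moreover, for these $P$, $f_0$ and $g$, $$[M_f]=P(C_{f_0})\,[g].$$
   Context: Here $\gcd$ denotes the monic greatest common divisor and $f'$ the formal derivative. For a positive integer $s$, $F_s[X]$ denotes the subspace of $F[X]$ of polynomials of degree less than $s$, with basis $1,X,\dots,X^{s-1}$; for a polynomial $R$ of degree less than $s$ (with coefficients in $F$ or $K$), $[R]$ denotes the column vector of its coordinates $(r_0,\dots,r_{s-1})^T$ relative to $1,X,\dots,X^{s-1}$, where $R=r_0+r_1X+\dots+r_{s-1}X^{s-1}$. For a monic polynomial $q=q_0+q_1X+\cdots+q_{s-1}X^{s-1}+X^s$ of positive degree $s$, its companion matrix $C_q\in M_s(F)$ is the $s\times s$ matrix with $1$'s on the subdiagonal (entries $(i+1,i)$ for $i=1,\dots,s-1$), last column $(-q_0,-q_1,\dots,-q_{s-1})^T$, and all other entries $0$. For a polynomial $R$ and square matrix $A$, $R(A)$ denotes evaluation of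 $R$ at $A$. *)

theory Defs
  imports "HOL-Computational_Algebra.Polynomial_Factorial" "Jordan_Normal_Form.Matrix"
begin

definition is_field_hom :: "('a::field \<Rightarrow> 'b::field) \<Rightarrow> bool" where
  "is_field_hom \<phi> \<longleftrightarrow> \<phi> 1 = 1 \<and> (\<forall>x y. \<phi> (x + y) = \<phi> x + \<phi> y) \<and> (\<forall>x y. \<phi> (x * y) = \<phi> x * \<phi> y)"

definition is_subfield :: "'b::field set \<Rightarrow> bool" where
  "is_subfield T \<longleftrightarrow> 0 \<in> T \<and> 1 \<in> T \<and> (\<forall>x\<in>T. \<forall>y\<in>T. x + y \<in> T \<and> x * y \<in> T)
     \<and> (\<forall>x\<in>T. - x \<in> T \<and> inverse x \<in> T)"

definition root_set :: "('a::field \<Rightarrow> 'b::field) \<Rightarrow> 'a poly \<Rightarrow> 'b set" where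
  "root_set \<phi> f = {\<alpha>. poly (map_poly \<phi> f) \<alpha> = 0}"

definition is_splitting_field :: "('a::field \<Rightarrow> 'b::field) \<Rightarrow> 'a poly \<Rightarrow> bool" where
  "is_splitting_field \<phi> f \<longleftrightarrow> is_field_hom \<phi>
     \<and> (\<exists>rs. map_poly \<phi> f = Polynomial.smult (\<phi> (lead_coeff f)) (\<Prod>r\<leftarrow>rs. [:- r, 1:]))
     \<and> (\<forall>T. is_subfield T \<and> range \<phi> \<subseteq> T \<and> root_set \<phi> f \<subseteq> T \<longrightarrow> T = UNIV)"

definition companion_mat :: "'a::comm_ring_1 poly \<Rightarrow> 'a mat" where
  "companion_mat q = (let s = degree q in
     mat s s (\<lambda>(i, j). if j = s - 1 then - coeff q i else if i = j + 1 then 1 else 0))"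

definition poly_mat_eval :: "'a::comm_ring_1 poly \<Rightarrow> nat \<Rightarrow> 'a mat \<Rightarrow> 'a mat" where
  "poly_mat_eval R n A = foldr (\<lambda>c M. c \<cdot>\<^sub>m 1\<^sub>m n + A * M) (coeffs R) (0\<^sub>m n n)"

definition coord_vec :: "nat \<Rightarrow> 'a::zero poly \<Rightarrow> 'a vec" where
  "coord_vec s R = vec s (\<lambda>i. coeff R i)"

end

theory Submission
  imports Defs "Jordan_Normal_Form.Char_Poly"
begin

text \<open>Let \<open>G = gcd f f'\<close>. At a root \<open>\<alpha>\<close> of \<open>f\<close> of multiplicity \<open>m\<close>, \<open>(X - \<alpha>)\<^sup>m\<^sup>-\<^sup>1\<close>
  divides \<open>G\<close> exactly, so \<open>\<alpha>\<close> is a simple root of \<open>f\<^sub>0 = f / G\<close> and \<open>P = f' / G\<close> satisfies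
  \<open>P(\<alpha>) = m f\<^sub>0'(\<alpha>)\<close>. Since \<open>f\<close> splits, it follows that \<open>f\<^sub>0\<close> is coprime to \<open>f\<^sub>0'\<close> and has at
  most \<open>|S(f)|\<close> roots, so \<open>s \<le> |S(f)|\<close>. If \<open>f\<^sub>0' g + f\<^sub>0 h = 1\<close>, then \<open>g(\<alpha>) = 1 / f\<^sub>0'(\<alpha>)\<close>,
  hence \<open>R = P g mod f\<^sub>0\<close> takes the value \<open>m(\<alpha>)\<close> on \<open>S(f)\<close>; as \<open>deg R < s\<close>, uniqueness of
  interpolation gives \<open>R = M\<^sub>f\<close>. Finally \<open>C\<^sub>f\<^sub>0\<close> is the matrix of multiplication by \<open>X\<close> on
  \<open>F[X]/(f\<^sub>0)\<close> in the basis \<open>1, X, \<dots>, X\<^sup>s\<^sup>-\<^sup>1\<close>, so \<open>P(C\<^sub>f\<^sub>0)[g] = [P g mod f\<^sub>0]\<close>.\<close>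

lemma field_hom_if_is_field_hom:
  assumes "is_field_hom \<phi>"
  shows "field_hom \<phi>"
proof -
  have hom: "\<phi> (x + y) = \<phi> x + \<phi> y" "\<phi> (x * y) = \<phi> x * \<phi> y" "\<phi> 1 = 1" for x y
    using assms unfolding is_field_hom_def by auto
  then have "\<phi> 0 = 0"
    by (metis add_cancel_right_right add_0)
  then show ?thesis
    by unfold_locales (simp_all add: hom)
qed

lemma simple_roots_linear_factor:
  fixes p :: "'a::idom poly"
  assumes "\<And>\<alpha>. poly ([:-r, 1:] * p) \<alpha> = 0 \<Longrightarrow> poly (pderiv ([:-r, 1:] * p)) \<alpha> \<noteq> 0"
  shows "poly p r \<noteq> 0" and "\<And>\<alpha>. poly p \<alpha> = 0 \<Longrightarrow> poly (pderiv p) \<alpha> \<noteq> 0"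
proof -
  have pderiv: "pderiv ([:-r, 1:] * p) = [:-r, 1:] * pderiv p + p"
    by (simp only: pderiv_mult) (simp add: pderiv_pCons)
  show "poly p r \<noteq> 0"
    using assms[of r] unfolding pderiv by simp
  show "poly (pderiv p) \<alpha> \<noteq> 0" if "poly p \<alpha> = 0" for \<alpha>
    using assms[of \<alpha>] that unfolding pderiv by simp
qed

lemma degree_le_card_roots_if_dvd_linear_prod:
  fixes p :: "'a::field poly"
  assumes "p dvd (\<Prod>r\<leftarrow>rs. [:-r, 1:])" and "p \<noteq> 0"
    and "\<And>\<alpha>. poly p \<alpha> = 0 \<Longrightarrow> poly (pderiv p) \<alpha> \<noteq> 0"
  shows "degree p \<le> card {\<alpha>. poly p \<alpha> = 0}"
  using assms
proof (induction rs arbitrary: p)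
  case Nil
  then show ?case
    by (simp add: is_unit_iff_degree)
next
  case (Cons r rs)
  define L where "L = [:-r, 1:]"
  define Q where "Q = (\<Prod>r\<leftarrow>rs. [:-r, 1:])"
  have "p dvd L * Q"
    using Cons.prems(1) by (simp add: L_def Q_def)
  have "L \<noteq> 0"
    by (simp add: L_def)
  show ?case
  proof (cases "poly p r = 0")
    case True
    then have "L dvd p"
      by (simp add: L_def dvd_iff_poly_eq_0)
    then obtain p1 where p1: "p = L * p1" ..
    then have "p1 \<noteq> 0" "p1 dvd Q"
      using Cons.prems(2) \<open>p dvd L * Q\<close> by auto
    note simple = simple_roots_linear_factor[OF Cons.prems(3)[unfolded p1 L_def]]
    have "degree p = Suc (degree p1)"
      using \<open>p1 \<noteq> 0\<close> \<open>L \<noteq> 0\<close> by (simp add: p1 degree_mult_eq) (simp add: L_def)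
    also have "\<dots> \<le> card (insert r {\<alpha>. poly p1 \<alpha> = 0})"
      using simple Cons.IH \<open>p1 dvd Q\<close> \<open>p1 \<noteq> 0\<close> poly_roots_finite[OF \<open>p1 \<noteq> 0\<close>]
      unfolding Q_def by fastforce
    also have "\<dots> \<le> card {\<alpha>. poly p \<alpha> = 0}"
      using True Cons.prems(2) by (intro card_mono poly_roots_finite) (auto simp: p1)
    finally show ?thesis .
  next
    case False
    from \<open>p dvd L * Q\<close> obtain k where k: "L * Q = p * k"
      by (metis dvdE)
    have "poly k r = 0"
      using arg_cong[OF k, of "\<lambda>q. poly q r"] False by (simp add: L_def)
    then have "L dvd k"
      by (simp add: L_def dvd_iff_poly_eq_0)
    then obtain k1 where "k = L * k1" ..
    then have "Q = p * k1"
      using k \<open>L \<noteq> 0\<close> by (simp add: mult.left_commute)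
    then have "p dvd Q" ..
    then show ?thesis
      using Cons.IH Cons.prems(2,3) unfolding Q_def by blast
  qed
qed

lemma root_exists_if_dvd_linear_prod:
  fixes p :: "'a::field poly"
  assumes "p dvd (\<Prod>r\<leftarrow>rs. [:-r, 1:])" and "degree p > 0"
  obtains \<alpha> where "poly p \<alpha> = 0"
  using degree_le_card_roots_if_dvd_linear_prod[OF assms(1)] assms(2) by fastforce

lemma pderiv_linear_power_mult:
  fixes q :: "'a::idom poly"
  shows "pderiv ([:-\<alpha>, 1:] ^ Suc k * q)
    = [:-\<alpha>, 1:] ^ k * (Polynomial.smult (of_nat (Suc k)) q + [:-\<alpha>, 1:] * pderiv q)"
proof -
  have "pderiv ([:-\<alpha>, 1:] ^ Suc k) = Polynomial.smult (of_nat (Suc k)) ([:-\<alpha>, 1:] ^ k)"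
    by (subst pderiv_power_Suc) (simp add: pderiv_pCons)
  then show ?thesis
    unfolding pderiv_mult by (simp add: algebra_simps)
qed

lemma local_cofactors_at_root:
  fixes q u f0 P :: "'a::field poly"
  assumes f_cofactor: "[:-\<alpha>, 1:] * q = f0 * u"
    and pderiv_cofactor: "Polynomial.smult c q + [:-\<alpha>, 1:] * pderiv q = P * u"
    and "poly q \<alpha> \<noteq> 0" and "c \<noteq> 0"
  shows "poly f0 \<alpha> = 0" and "poly (pderiv f0) \<alpha> \<noteq> 0"
    and "poly P \<alpha> = c * poly (pderiv f0) \<alpha>"
proof -
  from arg_cong[OF pderiv_cofactor, of "\<lambda>p. poly p \<alpha>"]
  have P_u: "c * poly q \<alpha> = poly P \<alpha> * poly u \<alpha>"
    by simp
  then have "poly u \<alpha> \<noteq> 0"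
    using assms(3,4) by auto
  from arg_cong[OF f_cofactor, of "\<lambda>p. poly p \<alpha>"]
  show "poly f0 \<alpha> = 0"
    using \<open>poly u \<alpha> \<noteq> 0\<close> by simp
  moreover from arg_cong[OF f_cofactor, of "\<lambda>p. poly (pderiv p) \<alpha>"]
  have "poly q \<alpha> = poly f0 \<alpha> * poly (pderiv u) \<alpha> + poly u \<alpha> * poly (pderiv f0) \<alpha>"
    by (simp only: pderiv_mult) (simp add: pderiv_pCons)
  ultimately have q_u: "poly q \<alpha> = poly u \<alpha> * poly (pderiv f0) \<alpha>"
    by simp
  then show "poly (pderiv f0) \<alpha> \<noteq> 0"
    using assms(3) by auto
  have "poly P \<alpha> * poly u \<alpha> = c * poly (pderiv f0) \<alpha> * poly u \<alpha>"
    using P_u q_u by (metis mult.assoc mult.commute)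
  then show "poly P \<alpha> = c * poly (pderiv f0) \<alpha>"
    using \<open>poly u \<alpha> \<noteq> 0\<close> by simp
qed

text \<open>The splitting field is only assumed to be a field; the hypothesis that the multiplicity is
  nonzero in it is what characteristic zero would otherwise provide.\<close>

lemma gcd_cofactors_at_root:
  fixes f f0 P G a b :: "'a::field poly"
  assumes factors: "f = f0 * G" "pderiv f = P * G"
    and combination: "G = a * f + b * pderiv f"
    and "f \<noteq> 0" and root: "poly f \<alpha> = 0"
    and multiplicity: "of_nat (order \<alpha> f) \<noteq> (0::'a)"
  shows "poly f0 \<alpha> = 0" and "poly (pderiv f0) \<alpha> \<noteq> 0"
    and "poly P \<alpha> = of_nat (order \<alpha> f) * poly (pderiv f0) \<alpha>"
proof -
  define L where "L = [:-\<alpha>, 1:]"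
  obtain k where k: "order \<alpha> f = Suc k"
    using root \<open>f \<noteq> 0\<close> order_root[of f \<alpha>] not0_implies_Suc by blast
  obtain q where f: "f = L ^ Suc k * q" and "\<not> L dvd q"
    using order_decomp[OF \<open>f \<noteq> 0\<close>, of \<alpha>] unfolding k L_def by blast
  then have "poly q \<alpha> \<noteq> 0"
    by (simp add: L_def dvd_iff_poly_eq_0)
  have pderiv_f: "pderiv f = L ^ k * (Polynomial.smult (of_nat (Suc k)) q + L * pderiv q)"
    unfolding f L_def by (rule pderiv_linear_power_mult)
  have "L ^ k dvd G"
    unfolding combination pderiv_f by (intro dvd_add) (simp_all add: f)
  then obtain u where u: "G = L ^ k * u" ..
  have "L ^ k \<noteq> 0"
    by (simp add: L_def)
  moreover have "L ^ k * (L * q) = L ^ k * (f0 * u)"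
    using factors(1) by (simp add: f u algebra_simps)
  moreover have "L ^ k * (Polynomial.smult (of_nat (Suc k)) q + L * pderiv q) = L ^ k * (P * u)"
    using factors(2) by (simp add: pderiv_f u algebra_simps)
  ultimately show "poly f0 \<alpha> = 0" "poly (pderiv f0) \<alpha> \<noteq> 0"
    "poly P \<alpha> = of_nat (order \<alpha> f) * poly (pderiv f0) \<alpha>"
    using local_cofactors_at_root[of \<alpha> q f0 u "of_nat (Suc k)" P] \<open>poly q \<alpha> \<noteq> 0\<close> multiplicity
    unfolding L_def k by simp_all
qed

lemma bezout_unique_degree_less:
  fixes a b :: "'a::field_gcd poly"
  assumes "coprime a b" and "degree b > 0"
  shows "\<exists>!gh. degree (fst gh) < degree b \<and> a * fst gh + b * snd gh = 1"
proof (rule ex_ex1I)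
  from assms(2) have "b \<noteq> 0"
    by auto
  obtain u v where uv: "u * a + v * b = 1"
    using bezout_coefficients_fst_snd[of a b] assms(1) by (metis coprime_imp_gcd_eq_1)
  define w r where "w = u div b" and "r = u mod b"
  have "u = w * b + r"
    by (simp add: w_def r_def)
  then have "a * r + b * (v + w * a) = 1"
    using uv by (simp add: algebra_simps)
  then have "a * fst (u mod b, v + u div b * a) + b * snd (u mod b, v + u div b * a) = 1"
    by (simp add: w_def r_def)
  moreover have "degree (u mod b) < degree b"
    using \<open>b \<noteq> 0\<close> assms(2) degree_mod_less[of b u] by (cases "u mod b = 0") auto
  ultimately show "\<exists>gh. degree (fst gh) < degree b \<and> a * fst gh + b * snd gh = 1"
    by (metis fst_conv)
next
  fix x y :: "'a poly \<times> 'a poly"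
  assume x: "degree (fst x) < degree b \<and> a * fst x + b * snd x = 1"
    and y: "degree (fst y) < degree b \<and> a * fst y + b * snd y = 1"
  then have diff: "a * (fst x - fst y) = b * (snd y - snd x)"
    by (simp add: algebra_simps)
  have "coprime b a"
    using assms(1) by (simp add: ac_simps)
  moreover have "b dvd a * (fst x - fst y)"
    unfolding diff by simp
  ultimately have "b dvd fst x - fst y"
    by (simp add: coprime_dvd_mult_right_iff)
  have "fst x = fst y"
  proof (rule ccontr)
    assume "fst x \<noteq> fst y"
    with \<open>b dvd fst x - fst y\<close> have "degree b \<le> degree (fst x - fst y)"
      by (intro dvd_imp_degree_le) auto
    then show False
      using x y degree_diff_le_max[of "fst x" "fst y"] by linarith
  qed
  moreover from assms(2) have "b \<noteq> 0"
    by auto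
  ultimately have "snd x = snd y"
    using diff by simp
  with \<open>fst x = fst y\<close> show "x = y"
    by (simp add: prod_eq_iff)
qed

lemma poly_eqI_card_gt_degree:
  fixes p q :: "'a::idom poly"
  assumes "degree p < card A" and "degree q < card A"
    and "\<And>x. x \<in> A \<Longrightarrow> poly p x = poly q x"
  shows "p = q"
proof (rule ccontr)
  assume "p \<noteq> q"
  then have "card A \<le> card {x. poly (p - q) x = 0}"
    using assms by (intro card_mono poly_roots_finite) auto
  also have "\<dots> \<le> degree (p - q)"
    using \<open>p \<noteq> q\<close> by (intro card_poly_roots_bound) simp
  also have "\<dots> < card A"
    using assms(1,2) degree_diff_le_max[of p q] by linarith
  finally show False
    by simp
qed

lemma coord_vec_carrier [simp]: "coord_vec s p \<in> carrier_vec s"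
  by (simp add: coord_vec_def)

lemma coord_vec_add: "coord_vec s (p + q) = coord_vec s p + coord_vec s q"
  by (auto simp: coord_vec_def)

lemma coord_vec_smult: "coord_vec s (Polynomial.smult c p) = c \<cdot>\<^sub>v coord_vec s p"
  by (auto simp: coord_vec_def)

lemma companion_mat_carrier: "companion_mat q \<in> carrier_mat (degree q) (degree q)"
  by (simp add: companion_mat_def Let_def)

lemma companion_mat_mult_coord_vec:
  fixes p q :: "'a::field poly"
  assumes monic: "lead_coeff q = 1" and deg: "degree p < degree q"
  shows "companion_mat q *\<^sub>v coord_vec (degree q) p = coord_vec (degree q) ([:0, 1:] * p mod q)"
proof -
  define s where "s = degree q"
  define c where "c = coeff p (s - 1)"
  define D where "D = pCons 0 p - Polynomial.smult c q"
  have coeff_D: "coeff D i = (if i = 0 then 0 else coeff p (i - 1)) - c * coeff q i" for i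
    by (cases i) (simp_all add: D_def)
  \<comment> \<open>subtracting \<open>c q\<close> kills the coefficient of \<open>X\<^sup>s\<close>, so \<open>D\<close> is the remainder of \<open>X p\<close>\<close>
  have "degree D < s"
  proof -
    have "coeff D i = 0" if "s \<le> i" for i
      using that deg monic coeff_eq_0[of p "i - 1"] coeff_eq_0[of q i]
      by (cases "i = s") (auto simp: coeff_D c_def s_def)
    then have "degree D \<le> s - 1"
      by (intro degree_le) auto
    then show ?thesis
      using deg unfolding s_def by linarith
  qed
  moreover have "[:0, 1:] * p = D + q * [:c:]"
    by (simp add: D_def)
  ultimately have "[:0, 1:] * p mod q = D"
    using mod_mult_self2[of D q "[:c:]"] mod_poly_less[of D q] unfolding s_def by metis
  moreover have "(companion_mat q *\<^sub>v coord_vec s p) $ i = coeff D i" if "i < s" for i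
  proof -
    have "(companion_mat q *\<^sub>v coord_vec s p) $ i
        = (\<Sum>j<s. (if j = s - 1 then - coeff q i * coeff p j else 0)
                   + (if j + 1 = i then coeff p j else 0))"
      using that by (auto simp: companion_mat_def Let_def coord_vec_def scalar_prod_def s_def
          atLeast0LessThan intro!: sum.cong)
    also have "\<dots> = - coeff q i * c + (if i = 0 then 0 else coeff p (i - 1))"
      using that deg by (cases i) (auto simp: sum.distrib c_def s_def)
    finally show ?thesis
      by (simp add: coeff_D algebra_simps)
  qed
  ultimately show ?thesis
    unfolding s_def by (intro eq_vecI) (auto simp: companion_mat_def Let_def coord_vec_def)
qed

lemma smult_one_mat_mult_vec:
  fixes v :: "'a::comm_ring_1 vec"
  assumes "v \<in> carrier_vec n"
  shows "(a \<cdot>\<^sub>m 1\<^sub>m n) *\<^sub>v v = a \<cdot>\<^sub>v v"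
proof (rule eq_vecI)
  fix i
  assume "i < dim_vec (a \<cdot>\<^sub>v v)"
  with assms have "i < n"
    by simp
  then have "(\<Sum>j<n. a * (if j = i then 1 else 0) * v $ j) = (\<Sum>j<n. if j = i then a * v $ j else 0)"
    by (intro sum.cong) auto
  also have "\<dots> = a * v $ i"
    using \<open>i < n\<close> by simp
  finally have "(\<Sum>j<n. a * (if j = i then 1 else 0) * v $ j) = a * v $ i" .
  with \<open>i < n\<close> assms show "((a \<cdot>\<^sub>m 1\<^sub>m n) *\<^sub>v v) $ i = (a \<cdot>\<^sub>v v) $ i"
    by (simp add: scalar_prod_def atLeast0LessThan)
qed (use assms in simp)

lemma poly_mat_eval_pCons:
  fixes A :: "'a::comm_ring_1 mat"
  assumes "A \<in> carrier_mat n n"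
  shows "poly_mat_eval (pCons a p) n A = a \<cdot>\<^sub>m 1\<^sub>m n + A * poly_mat_eval p n A"
proof (cases "a = 0 \<and> p = 0")
  case True
  with assms show ?thesis
    by (intro eq_matI) (auto simp: poly_mat_eval_def)
next
  case False
  then show ?thesis
    by (auto simp: poly_mat_eval_def coeffs_pCons_eq_cCons cCons_def)
qed

lemma poly_mat_eval_carrier:
  "A \<in> carrier_mat n n \<Longrightarrow> poly_mat_eval p n A \<in> carrier_mat n n"
  by (induction p rule: pCons_induct) (auto simp: poly_mat_eval_pCons, simp add: poly_mat_eval_def)

lemma poly_mat_eval_companion_mult_coord_vec:
  fixes p q R :: "'a::field poly"
  assumes monic: "lead_coeff q = 1" and deg: "degree p < degree q"
  shows "poly_mat_eval R (degree q) (companion_mat q) *\<^sub>v coord_vec (degree q) p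
    = coord_vec (degree q) (R * p mod q)"
proof (induction R rule: pCons_induct)
  case 0
  show ?case
    by (auto simp: poly_mat_eval_def coord_vec_def)
next
  case (pCons a R)
  define s where "s = degree q"
  define C where "C = companion_mat q"
  define E where "E = poly_mat_eval R s C"
  have "q \<noteq> 0"
    using deg by auto
  then have "degree (R * p mod q) < degree q"
    using deg degree_mod_less[of q "R * p"] by (cases "R * p mod q = 0") auto
  have "C \<in> carrier_mat s s" "E \<in> carrier_mat s s"
    using companion_mat_carrier poly_mat_eval_carrier by (auto simp: C_def E_def s_def)
  then have "poly_mat_eval (pCons a R) s C *\<^sub>v coord_vec s p
      = (a \<cdot>\<^sub>m 1\<^sub>m s) *\<^sub>v coord_vec s p + C *\<^sub>v (E *\<^sub>v coord_vec s p)"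
    by (simp add: poly_mat_eval_pCons E_def add_mult_distrib_mat_vec[of _ s s] assoc_mult_mat_vec[of _ s s])
  also have "(a \<cdot>\<^sub>m 1\<^sub>m s) *\<^sub>v coord_vec s p = coord_vec s (Polynomial.smult a p mod q)"
    using deg degree_smult_le[of a p]
    by (simp add: smult_one_mat_mult_vec coord_vec_smult mod_poly_less s_def)
  also have "C *\<^sub>v (E *\<^sub>v coord_vec s p) = coord_vec s ([:0, 1:] * (R * p mod q) mod q)"
    using \<open>degree (R * p mod q) < degree q\<close>
    by (simp only: C_def E_def s_def pCons.IH companion_mat_mult_coord_vec[OF monic])
  also have "coord_vec s (Polynomial.smult a p mod q) + \<dots> = coord_vec s (pCons a R * p mod q)"
  proof -
    have "pCons a R * p = Polynomial.smult a p + [:0, 1:] * (R * p)"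
      by simp
    then show ?thesis
      by (simp only: coord_vec_add[symmetric] poly_mod_add_left mod_mult_right_eq)
  qed
  finally show ?case
    by (simp add: s_def C_def)
qed

abbreviation squarefree_part :: "'a::field_gcd poly \<Rightarrow> 'a poly" where
  "squarefree_part f \<equiv> f div gcd f (pderiv f)"

lemma squarefree_part_dvd: "squarefree_part f dvd f"
  by (metis dvd_div_mult_self dvd_triv_left gcd_dvd1)

lemma monic_squarefree_part:
  assumes "lead_coeff f = 1"
  shows "lead_coeff (squarefree_part f) = 1"
proof -
  have "f = squarefree_part f * gcd f (pderiv f)"
    by simp
  then have "lead_coeff (squarefree_part f) * lead_coeff (gcd f (pderiv f)) = 1"
    using assms by (metis lead_coeff_mult)
  moreover have "f \<noteq> 0"
    using assms by auto
  ultimately show ?thesis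
    using poly_gcd_monic[of f "pderiv f"] by simp
qed

context
  fixes \<phi> :: "'a::{field_char_0,field_gcd} \<Rightarrow> 'b::field"
  assumes field_hom: "field_hom \<phi>"
begin

interpretation field_hom \<phi>
  by (rule field_hom)

interpretation map_poly_hom: map_poly_inj_idom_hom \<phi> ..

lemma squarefree_part_at_root:
  fixes f :: "'a poly"
  assumes "f \<noteq> 0" and root: "poly (map_poly \<phi> f) \<alpha> = 0"
  defines "f0 \<equiv> squarefree_part f" and "P \<equiv> pderiv f div gcd f (pderiv f)"
  shows "poly (map_poly \<phi> f0) \<alpha> = 0" and "poly (pderiv (map_poly \<phi> f0)) \<alpha> \<noteq> 0"
    and "poly (map_poly \<phi> P) \<alpha>
      = of_nat (order \<alpha> (map_poly \<phi> f)) * poly (pderiv (map_poly \<phi> f0)) \<alpha>"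
proof -
  define G where "G = gcd f (pderiv f)"
  obtain a b where combination: "G = a * f + b * pderiv f"
    using bezout_coefficients_fst_snd[of f "pderiv f"] unfolding G_def by metis
  have "f = f0 * G" "pderiv f = P * G"
    by (simp_all add: f0_def P_def G_def)
  then have factors: "map_poly \<phi> f = map_poly \<phi> f0 * map_poly \<phi> G"
    "pderiv (map_poly \<phi> f) = map_poly \<phi> P * map_poly \<phi> G"
    by (metis map_poly_hom.hom_mult map_poly_pderiv)+
  have "map_poly \<phi> G = map_poly \<phi> a * map_poly \<phi> f + map_poly \<phi> b * pderiv (map_poly \<phi> f)"
    by (simp add: combination hom_distribs)
  moreover have "order \<alpha> (map_poly \<phi> f) \<noteq> 0"
    using root \<open>f \<noteq> 0\<close> by (simp add: order_root)
  then have "of_nat (order \<alpha> (map_poly \<phi> f)) \<noteq> (0::'b)"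
    by (metis hom_of_nat hom_0_iff of_nat_eq_0_iff)
  ultimately show "poly (map_poly \<phi> f0) \<alpha> = 0" "poly (pderiv (map_poly \<phi> f0)) \<alpha> \<noteq> 0"
    "poly (map_poly \<phi> P) \<alpha> = of_nat (order \<alpha> (map_poly \<phi> f)) * poly (pderiv (map_poly \<phi> f0)) \<alpha>"
    using gcd_cofactors_at_root[OF factors] root \<open>f \<noteq> 0\<close> by simp_all
qed

lemma coprime_squarefree_part_pderiv:
  fixes f :: "'a poly"
  assumes split: "map_poly \<phi> f = (\<Prod>r\<leftarrow>rs. [:-r, 1:])"
  defines "f0 \<equiv> squarefree_part f"
  shows "coprime f0 (pderiv f0)"
proof (rule ccontr)
  assume "\<not> coprime f0 (pderiv f0)"
  then obtain d where "d dvd f0" "d dvd pderiv f0" "\<not> is_unit d"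
    by (rule not_coprimeE)
  have "f \<noteq> 0"
    using split by auto
  then have "f0 \<noteq> 0"
    by (simp add: f0_def dvd_div_eq_0_iff)
  then have "d \<noteq> 0"
    using \<open>d dvd f0\<close> by auto
  with \<open>\<not> is_unit d\<close> have "degree (map_poly \<phi> d) > 0"
    by (simp add: is_unit_iff_degree)
  have d_dvd: "map_poly \<phi> d dvd map_poly \<phi> f0" "map_poly \<phi> d dvd pderiv (map_poly \<phi> f0)"
    using \<open>d dvd f0\<close> \<open>d dvd pderiv f0\<close> by (simp_all flip: map_poly_pderiv add: map_poly_hom.hom_dvd)
  have f0_dvd: "map_poly \<phi> f0 dvd map_poly \<phi> f"
    using squarefree_part_dvd[of f] by (simp add: f0_def map_poly_hom.hom_dvd)
  then have "map_poly \<phi> d dvd (\<Prod>r\<leftarrow>rs. [:-r, 1:])"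
    using d_dvd(1) split by (metis dvd_trans)
  then obtain \<alpha> where "poly (map_poly \<phi> d) \<alpha> = 0"
    using root_exists_if_dvd_linear_prod \<open>degree (map_poly \<phi> d) > 0\<close> by blast
  then have "poly (map_poly \<phi> f0) \<alpha> = 0" "poly (pderiv (map_poly \<phi> f0)) \<alpha> = 0"
    using d_dvd by (auto elim!: dvdE)
  moreover have "poly (map_poly \<phi> f) \<alpha> = 0"
    using \<open>poly (map_poly \<phi> f0) \<alpha> = 0\<close> f0_dvd by (auto elim!: dvdE)
  ultimately show False
    using squarefree_part_at_root(2)[OF \<open>f \<noteq> 0\<close>] unfolding f0_def by blast
qed

lemma degree_squarefree_part_le_card_roots:
  fixes f :: "'a poly"
  assumes split: "map_poly \<phi> f = (\<Prod>r\<leftarrow>rs. [:-r, 1:])"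
  shows "degree (squarefree_part f) \<le> card (root_set \<phi> f)"
proof -
  define f0 where "f0 = squarefree_part f"
  have "f \<noteq> 0"
    using split by auto
  have "map_poly \<phi> f0 dvd map_poly \<phi> f"
    using squarefree_part_dvd[of f] by (simp add: f0_def map_poly_hom.hom_dvd)
  then have "map_poly \<phi> f0 dvd (\<Prod>r\<leftarrow>rs. [:-r, 1:])"
    by (simp add: split)
  moreover have "map_poly \<phi> f0 \<noteq> 0"
    using \<open>f \<noteq> 0\<close> by (simp add: f0_def dvd_div_eq_0_iff)
  moreover have "poly (pderiv (map_poly \<phi> f0)) \<alpha> \<noteq> 0" if "poly (map_poly \<phi> f0) \<alpha> = 0" for \<alpha>
    using squarefree_part_at_root(2)[OF \<open>f \<noteq> 0\<close>] that \<open>map_poly \<phi> f0 dvd map_poly \<phi> f\<close>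
    by (metis f0_def dvd_def mult_eq_0_iff poly_mult)
  ultimately have "degree (map_poly \<phi> f0) \<le> card {\<alpha>. poly (map_poly \<phi> f0) \<alpha> = 0}"
    by (rule degree_le_card_roots_if_dvd_linear_prod)
  also have "\<dots> \<le> card {\<alpha>. poly (map_poly \<phi> f) \<alpha> = 0}"
    using \<open>map_poly \<phi> f0 dvd map_poly \<phi> f\<close> \<open>f \<noteq> 0\<close>
    by (intro card_mono poly_roots_finite) (auto elim!: dvdE)
  finally show ?thesis
    by (simp add: f0_def root_set_def)
qed

lemma degree_squarefree_part_pos:
  fixes f :: "'a poly"
  assumes split: "map_poly \<phi> f = (\<Prod>r\<leftarrow>rs. [:-r, 1:])" and "degree f > 0"
  shows "degree (squarefree_part f) > 0"
proof -
  have "f \<noteq> 0"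
    using assms(2) by auto
  have "degree (map_poly \<phi> f) > 0"
    using assms(2) by simp
  then obtain \<alpha> where "poly (map_poly \<phi> f) \<alpha> = 0"
    using root_exists_if_dvd_linear_prod[of "map_poly \<phi> f" rs] split by auto
  then have "pderiv (map_poly \<phi> (squarefree_part f)) \<noteq> 0"
    using squarefree_part_at_root(2)[OF \<open>f \<noteq> 0\<close>] by force
  then show ?thesis
    by (metis map_poly_pderiv map_poly_0 pderiv_eq_0_iff gr0I)
qed

lemma squarefree_part_remainder_at_root:
  fixes f g h :: "'a poly"
  assumes "f \<noteq> 0" and root: "poly (map_poly \<phi> f) \<alpha> = 0"
  defines "f0 \<equiv> squarefree_part f" and "P \<equiv> pderiv f div gcd f (pderiv f)"
  assumes bezout: "pderiv f0 * g + f0 * h = 1"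
  shows "poly (map_poly \<phi> (P * g mod f0)) \<alpha> = of_nat (order \<alpha> (map_poly \<phi> f))"
proof -
  note at_root = squarefree_part_at_root[OF assms(1,2), folded f0_def P_def]
  have "map_poly \<phi> (P * g) = map_poly \<phi> (P * g div f0) * map_poly \<phi> f0 + map_poly \<phi> (P * g mod f0)"
    by (simp flip: hom_distribs)
  from arg_cong[OF this, of "\<lambda>p. poly p \<alpha>"]
  have "poly (map_poly \<phi> (P * g mod f0)) \<alpha> = poly (map_poly \<phi> P) \<alpha> * poly (map_poly \<phi> g) \<alpha>"
    using at_root(1) by (simp add: hom_distribs)
  moreover from arg_cong[OF bezout, of "\<lambda>p. poly (map_poly \<phi> p) \<alpha>"]
  have "poly (pderiv (map_poly \<phi> f0)) \<alpha> * poly (map_poly \<phi> g) \<alpha> = 1"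
    using at_root(1) by (simp add: hom_distribs)
  ultimately show ?thesis
    using at_root(3) by (simp add: mult.assoc)
qed
lemma interpolant_eq_squarefree_part_remainder:
  fixes f g h :: "'a poly" and M :: "'b poly"
  assumes split: "map_poly \<phi> f = (\<Prod>r\<leftarrow>rs. [:-r, 1:])"
  defines "f0 \<equiv> squarefree_part f" and "P \<equiv> pderiv f div gcd f (pderiv f)"
  assumes bezout: "pderiv f0 * g + f0 * h = 1"
    and "degree M < card (root_set \<phi> f)"
    and interpolates: "\<And>\<alpha>. \<alpha> \<in> root_set \<phi> f \<Longrightarrow> poly M \<alpha> = of_nat (order \<alpha> (map_poly \<phi> f))"
  shows "M = map_poly \<phi> (P * g mod f0)"
proof (rule poly_eqI_card_gt_degree)
  have "f \<noteq> 0"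
    using split by auto
  then have "f0 \<noteq> 0"
    by (simp add: f0_def dvd_div_eq_0_iff)
  then have "P * g mod f0 = 0 \<or> degree (P * g mod f0) < degree f0"
    using degree_mod_less by blast
  then show "degree (map_poly \<phi> (P * g mod f0)) < card (root_set \<phi> f)"
    using degree_squarefree_part_le_card_roots[OF split] \<open>degree M < card (root_set \<phi> f)\<close>
    by (auto simp: f0_def)
  fix \<alpha>
  assume "\<alpha> \<in> root_set \<phi> f"
  then show "poly M \<alpha> = poly (map_poly \<phi> (P * g mod f0)) \<alpha>"
    using interpolates squarefree_part_remainder_at_root[OF \<open>f \<noteq> 0\<close> _ bezout[unfolded f0_def]]
    by (simp add: root_set_def f0_def P_def)
qed (fact \<open>degree M < card (root_set \<phi> f)\<close>)

end

theorem theorem2p1: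
  fixes f :: "'a::{field_char_0,field_gcd} poly" and \<phi> :: "'a \<Rightarrow> 'b::field"
  assumes monic: "lead_coeff f = 1"
    and deg: "degree f \<ge> 1"
    and split: "is_splitting_field \<phi> f"
  defines "f0 \<equiv> f div gcd f (pderiv f)"
    and "s \<equiv> degree (f div gcd f (pderiv f))"
    and "P \<equiv> pderiv f div gcd f (pderiv f)"
  shows "(\<exists>!gh. degree (fst gh) < s \<and> pderiv f0 * fst gh + f0 * snd gh = 1)
    \<and> (\<forall>g h (M :: 'b poly).
         degree g < s \<and> pderiv f0 * g + f0 * h = 1
         \<and> degree M < card (root_set \<phi> f)
         \<and> (\<forall>\<alpha>\<in>root_set \<phi> f. poly M \<alpha> = of_nat (order \<alpha> (map_poly \<phi> f)))
         \<longrightarrow> coord_vec s M = map_vec \<phi> (poly_mat_eval P s (companion_mat f0) *\<^sub>v coord_vec s g))"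
proof -
  have hom: "field_hom \<phi>"
    using split field_hom_if_is_field_hom unfolding is_splitting_field_def by blast
  then interpret field_hom \<phi> .
  obtain rs where rs: "map_poly \<phi> f = (\<Prod>r\<leftarrow>rs. [:-r, 1:])"
    using split monic unfolding is_splitting_field_def by auto
  have "s = degree f0" "s > 0"
    using degree_squarefree_part_pos[OF hom rs] deg by (auto simp: s_def f0_def)
  show ?thesis
  proof (intro conjI allI impI)
    have "coprime (pderiv f0) f0"
      using coprime_squarefree_part_pderiv[OF hom rs] by (simp add: f0_def ac_simps)
    then show "\<exists>!gh. degree (fst gh) < s \<and> pderiv f0 * fst gh + f0 * snd gh = 1"
      using bezout_unique_degree_less[of "pderiv f0" f0] \<open>s > 0\<close> \<open>s = degree f0\<close> by simp
  next
    fix g h and M :: "'b poly"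
    assume "degree g < s \<and> pderiv f0 * g + f0 * h = 1 \<and> degree M < card (root_set \<phi> f)
      \<and> (\<forall>\<alpha>\<in>root_set \<phi> f. poly M \<alpha> = of_nat (order \<alpha> (map_poly \<phi> f)))"
    then have "degree g < degree f0" and "M = map_poly \<phi> (P * g mod f0)"
      using interpolant_eq_squarefree_part_remainder[OF hom rs, of g h M]
      by (auto simp: \<open>s = degree f0\<close> f0_def P_def)
    then show "coord_vec s M = map_vec \<phi> (poly_mat_eval P s (companion_mat f0) *\<^sub>v coord_vec s g)"
      using poly_mat_eval_companion_mult_coord_vec[OF monic_squarefree_part[OF monic], of g P]
      by (auto simp: \<open>s = degree f0\<close> f0_def coord_vec_def)
  qed
qed

end
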